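(* For $\theta\in(0,1)$ define $P_0(\theta)=1-\theta$ and, for integers $r\ge 1$, \[ P_r(\theta)=r(1-\theta)\sum_{i=r}^{\infty}\frac{\theta^i}{i}. \] Then for each $r\ge 1$, the points $\theta\in(0,1)$ at which $P_{r-1}(\theta)=P_r(\theta)$ are exactly the points at which $\frac{d}{d\theta}P_r(\theta)=0$; that is, the intersection of $P_{r-1}$ and $P_r$ coincides with the location of the maximum value of $P_r$ on $(0,1)$. *)

theory Defs
  imports Complex_Main
begin

definition P :: "nat \<Rightarrow> real \<Rightarrow> real" where
  "P r t = (if r = 0 then 1 - t
            else real r * (1 - t) * (\<Sum>i. t ^ (i + r) / real (i + r)))"

end

theory Submission
  imports Defs "HOL-Analysis.Analysis"
begin

(* The series defining P r t is the tail T = sum_{i >= r} t^i / i of the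
   logarithmic series -ln (1 - t) = sum_{i >= 1} t^i / i, so everything has a
   closed form.  One finds P (r-1) t - P r t = (1 - t) (t^(r-1) - T) and, as
   T' = t^(r-1) / (1 - t), also P r ' t = r (t^(r-1) - T): both vanish exactly
   when T = t^(r-1). *)

(* The i = 0 summand is x^0 / 0 = 0, so the finite sum really starts at i = 1. *)
definition log_tail :: "nat \<Rightarrow> real \<Rightarrow> real" where
  "log_tail r x = - ln (1 - x) - (\<Sum>i<r. x ^ i / real i)"

lemma sums_log_tail:
  assumes "\<bar>x\<bar> < 1"
  shows "(\<lambda>i. x ^ (i + r) / real (i + r)) sums log_tail r x"
proof -
  have "(\<lambda>n. - ((- (- x)) ^ n) / of_nat n) sums ln (1 + (- x))"
    using ln_series'[of "- x"] assms by simp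
  then have "(\<lambda>n. x ^ n / real n) sums (- ln (1 - x))"
    using sums_minus by fastforce
  from sums_split_initial_segment[OF this, of r]
  show ?thesis unfolding log_tail_def .
qed

lemma P_eq_log_tail:
  assumes "r \<ge> 1" "\<bar>x\<bar> < 1"
  shows "P r x = real r * (1 - x) * log_tail r x"
  using assms sums_unique[OF sums_log_tail[OF assms(2)]] unfolding P_def by simp

lemma log_tail_Suc: "log_tail (Suc r) x = log_tail r x - x ^ r / real r"
  by (simp add: log_tail_def)

lemma log_tail_has_real_derivative:
  assumes "x < 1"
  shows "(log_tail (Suc m) has_real_derivative x ^ m / (1 - x)) (at x)"
proof (induction m)
  case 0
  have "((\<lambda>x. - ln (1 - x)) has_real_derivative 1 / (1 - x)) (at x)"
    using assms by (auto intro!: derivative_eq_intros)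
  then show ?case by (simp add: log_tail_def[abs_def])
next
  case (Suc m)
  have "((\<lambda>y. y ^ Suc m / real (Suc m)) has_real_derivative x ^ m) (at x)"
    using DERIV_cdivide[OF DERIV_pow[of "Suc m" x], of "real (Suc m)"]
    by (simp del: of_nat_Suc)
  from DERIV_diff[OF Suc.IH this]
  have "((\<lambda>y. log_tail (Suc (Suc m)) y) has_real_derivative x ^ m / (1 - x) - x ^ m) (at x)"
    by (simp only: log_tail_Suc)
  moreover have "x ^ m / (1 - x) - x ^ m = x ^ Suc m / (1 - x)"
    using assms by (simp add: field_simps)
  ultimately show ?case by simp
qed

lemma P_has_real_derivative:
  assumes "\<bar>x\<bar> < 1"
  shows "(P (Suc m) has_real_derivative
            real (Suc m) * (x ^ m - log_tail (Suc m) x)) (at x)"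
proof (rule has_field_derivative_transform_within_open)
  have "1 - x \<noteq> 0" using assms by simp
  have "((\<lambda>y. real (Suc m) * (1 - y) * log_tail (Suc m) y) has_real_derivative
          real (Suc m) * (- 1) * log_tail (Suc m) x
          + real (Suc m) * (1 - x) * (x ^ m / (1 - x))) (at x)"
    using assms by (auto intro!: derivative_eq_intros log_tail_has_real_derivative
                         simp del: of_nat_Suc)
  moreover have "real (Suc m) * (- 1) * log_tail (Suc m) x
          + real (Suc m) * (1 - x) * (x ^ m / (1 - x))
          = real (Suc m) * (x ^ m - log_tail (Suc m) x)"
    using \<open>1 - x \<noteq> 0\<close> by (simp add: field_simps del: of_nat_Suc)
  ultimately show "((\<lambda>y. real (Suc m) * (1 - y) * log_tail (Suc m) y) has_real_derivative
          real (Suc m) * (x ^ m - log_tail (Suc m) x)) (at x)"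
    by simp
  show "x \<in> {-1<..<1}" using assms by auto
qed (auto simp: P_eq_log_tail)

lemma P_eq_log_tail_Suc:
  assumes "\<bar>x\<bar> < 1"
  shows "P m x = (1 - x) * (real m * log_tail (Suc m) x + x ^ m)"
proof (cases m)
  case 0
  then show ?thesis by (simp add: P_def)
next
  case (Suc k)
  then have "real m \<noteq> 0" by simp
  have "P m x = real m * (1 - x) * (log_tail (Suc m) x + x ^ m / real m)"
    using Suc assms by (simp add: P_eq_log_tail log_tail_Suc)
  also have "\<dots> = (1 - x) * (real m * log_tail (Suc m) x + x ^ m)"
    using \<open>real m \<noteq> 0\<close> by (simp add: field_simps)
  finally show ?thesis .
qed

theorem lemma3p1:
  fixes r :: nat and t :: real
  assumes "r \<ge> 1" and "0 < t" and "t < 1"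
  shows "P (r - 1) t = P r t \<longleftrightarrow> (P r has_real_derivative 0) (at t)"
proof -
  obtain m where r: "r = Suc m" using assms(1) by (cases r) auto
  have t: "\<bar>t\<bar> < 1" using assms by simp
  have "P (r - 1) t - P r t = (1 - t) * (t ^ m - log_tail r t)"
    using P_eq_log_tail_Suc[OF t, of m] P_eq_log_tail[OF assms(1) t] r
    by (simp add: algebra_simps)
  then have "P (r - 1) t = P r t \<longleftrightarrow> t ^ m = log_tail r t"
    using assms by auto
  also have "\<dots> \<longleftrightarrow> (P r has_real_derivative 0) (at t)"
    using P_has_real_derivative[OF t, of m] DERIV_unique r by fastforce
  finally show ?thesis .
qed

end
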